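(* Let $a\in \mathcal{A}$ and $n\in \mathbb{N}$. Then $a$ has a generalized core-EP inverse if and only if (1) $a\in \mathcal{A}^d$; and (2) there exists a projection $p\in \mathcal{A}$ such that $pa=pap\in \mathcal{A}^{qnil}$ and $a^n+p\in \mathcal{A}^{-1}$.
   Context: $\mathcal{A}$ is a complex Banach *-algebra with identity; $\mathcal{A}^d$ is the set of generalized Drazin invertible elements, $\mathcal{A}^{qnil}$ the quasinilpotents, $\mathcal{A}^{-1}$ the invertible elements; a projection is $p=p^2=p^*$. The generalized core-EP inverse of $a$ is the unique $x$ with $ax^2=x$, $(ax)^*=ax$, $\lim_{n\to\infty}\|a^n-xa^{n+1}\|^{1/n}=0$. *)

theory Defs
  imports "HOL-Analysis.Analysis"
begin

class complex_banach_star_algebra = real_normed_algebra_1 + banach +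
  fixes cscale :: "complex \<Rightarrow> 'a \<Rightarrow> 'a"
    and invol :: "'a \<Rightarrow> 'a"
  assumes cscale_add_right: "cscale c (x + y) = cscale c x + cscale c y"
    and cscale_add_left: "cscale (c + d) x = cscale c x + cscale d x"
    and cscale_cscale: "cscale c (cscale d x) = cscale (c * d) x"
    and cscale_of_real: "cscale (complex_of_real r) x = scaleR r x"
    and norm_cscale: "norm (cscale c x) = cmod c * norm x"
    and cscale_left_mult: "cscale c x * y = cscale c (x * y)"
    and cscale_right_mult: "x * cscale c y = cscale c (x * y)"
    and invol_invol: "invol (invol x) = x"
    and invol_add: "invol (x + y) = invol x + invol y"
    and invol_cscale: "invol (cscale c x) = cscale (cnj c) (invol x)"
    and invol_mult: "invol (x * y) = invol y * invol x"

definition invertible_el :: "'a::complex_banach_star_algebra \<Rightarrow> bool" where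
  "invertible_el a \<longleftrightarrow> (\<exists>b. a * b = 1 \<and> b * a = 1)"

definition projection :: "'a::complex_banach_star_algebra \<Rightarrow> bool" where
  "projection p \<longleftrightarrow> p * p = p \<and> invol p = p"

definition quasinilpotent :: "'a::complex_banach_star_algebra \<Rightarrow> bool" where
  "quasinilpotent a \<longleftrightarrow> (\<forall>z::complex. z \<noteq> 0 \<longrightarrow> invertible_el (cscale z 1 - a))"

definition gd_invertible :: "'a::complex_banach_star_algebra \<Rightarrow> bool" where
  "gd_invertible a \<longleftrightarrow>
     (\<exists>x. x * a * x = x \<and> a * x = x * a \<and> quasinilpotent (a - a * a * x))"

definition is_gcore_EP_inverse :: "'a::complex_banach_star_algebra \<Rightarrow> 'a \<Rightarrow> bool" where
  "is_gcore_EP_inverse a x \<longleftrightarrow>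
     a * x ^ 2 = x \<and> invol (a * x) = a * x \<and>
     (\<lambda>n. root n (norm (a ^ n - x * a ^ (n + 1)))) \<longlonglongrightarrow> 0"

definition has_gcore_EP_inverse :: "'a::complex_banach_star_algebra \<Rightarrow> bool" where
  "has_gcore_EP_inverse a \<longleftrightarrow> (\<exists>x. is_gcore_EP_inverse a x)"

end

theory Submission
  imports Defs
begin

text \<open>
  Write \<open>w k = a ^ k - x * a ^ (k + 1)\<close>; the norm condition on a generalized core-EP
  inverse \<open>x\<close> says that \<open>w k\<close> decays faster than every geometric sequence. This forces
  \<open>x * a * x = x\<close>, makes \<open>q = a * x\<close> a projection, and for \<open>p = 1 - q\<close> gives
  \<open>p * a = p * a * p\<close> and \<open>(p * a) ^ (k + 1) = a * w k\<close>, so \<open>p * a\<close> is quasinilpotent.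
  With respect to \<open>q + p = 1\<close> the element \<open>a ^ n\<close> is block upper triangular, its
  \<open>q\<close>-corner is inverted by \<open>x ^ n\<close> and its \<open>p\<close>-corner is \<open>(p * a) ^ n\<close>, hence
  \<open>a ^ n + p\<close> is invertible. The generalized Drazin inverse is \<open>y = lim x ^ (k + 1) * a ^ k\<close>;
  the powers of \<open>a - a * a * y\<close> are \<open>e * (p * a) ^ k * e\<close> with \<open>e = 1 - a * y\<close>.

  Conversely, if \<open>v\<close> inverts \<open>a ^ n + p\<close>, then \<open>p * v * (1 - p) = 0\<close>, so \<open>v * (1 - p)\<close>
  inverts \<open>(a * (1 - p)) ^ n\<close> in the corner algebra of \<open>1 - p\<close>; this yields \<open>x\<close> with
  \<open>a * x = 1 - p\<close>, and then \<open>w k = (1 - x * a) * (p * a) ^ k\<close> for \<open>k \<ge> 1\<close>.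

  Both directions move between quasinilpotence and superexponential decay of powers. One way
  is a Neumann series. The other, the quasinilpotent case of Gelfand's spectral radius
  formula, is proved without holomorphic functional calculus: averaging the resolvent
  \<open>(1 - l * b)\<inverse>\<close> over the \<open>m\<close>-th roots of unity gives \<open>(1 - t ^ m * b ^ m)\<inverse>\<close>, with
  bounds independent of \<open>m\<close> because the resolvent is bounded and uniformly continuous on
  discs. So if \<open>t ^ m * norm (b ^ m) \<longlonglongrightarrow> 0\<close>, then \<open>(t + \<delta>) ^ m * norm (b ^ m)\<close> stays
  bounded for a \<open>\<delta>\<close> independent of \<open>t\<close>, and the radius \<open>t\<close> can be pushed out arbitrarily far.
\<close>

section \<open>Complex scalars and invertible elements\<close>

definition of_complex :: "complex \<Rightarrow> 'a::complex_banach_star_algebra" where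
  "of_complex z = cscale z 1"

lemma of_complex_mult_left: "of_complex z * x = cscale z x"
  by (simp add: of_complex_def cscale_left_mult)

lemma of_complex_commute: "of_complex z * x = x * of_complex z"
  by (simp add: of_complex_def cscale_left_mult cscale_right_mult)

lemma of_complex_add: "of_complex (z + w) = of_complex z + of_complex w"
  by (simp add: of_complex_def cscale_add_left)

lemma of_complex_mult: "of_complex (z * w) = of_complex z * of_complex w"
  by (simp add: of_complex_def cscale_left_mult cscale_cscale)

lemma of_complex_of_real: "of_complex (complex_of_real r) = of_real r"
  unfolding of_complex_def by (subst cscale_of_real) (simp add: of_real_def)

lemma of_complex_0 [simp]: "of_complex 0 = 0"
  using of_complex_of_real[of 0] by simp

lemma of_complex_1 [simp]: "of_complex 1 = 1"
  using of_complex_of_real[of 1] by simp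

lemma of_complex_of_nat: "of_complex (of_nat n) = of_nat n"
  using of_complex_of_real[of "real n"] by simp

lemma of_complex_diff: "of_complex (z - w) = of_complex z - of_complex w"
proof -
  have "of_complex (z - w) + of_complex w = of_complex z"
    by (simp flip: of_complex_add)
  then show ?thesis
    by (simp add: eq_diff_eq)
qed

lemma of_complex_sum: "of_complex (sum f A) = (\<Sum>i\<in>A. of_complex (f i))"
  by (induction A rule: infinite_finite_induct) (simp_all add: of_complex_add)

lemma norm_of_complex_mult: "norm (of_complex z * x) = cmod z * norm x"
  by (simp add: of_complex_mult_left norm_cscale)

lemma of_complex_mult_power: "(of_complex z * x) ^ k = of_complex (z ^ k) * x ^ k"
proof (induction k)
  case (Suc k)
  have "(of_complex z * x) ^ Suc k = of_complex z * (x * of_complex (z ^ k)) * x ^ k"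
    using Suc by (simp add: mult.assoc)
  then show ?case
    by (simp add: of_complex_commute[of "z ^ k" x, symmetric] of_complex_mult mult.assoc)
qed simp

lemma invol_one [simp]: "invol 1 = 1"
  using invol_mult[of "invol 1" 1] by (simp add: invol_invol)

lemma invol_diff: "invol (x - y) = invol x - invol y"
proof -
  have "invol (x - y) + invol y = invol x"
    by (simp flip: invol_add)
  then show ?thesis
    by (simp add: eq_diff_eq)
qed

lemma invertible_elI: "u * v = 1 \<Longrightarrow> v * u = 1 \<Longrightarrow> invertible_el u"
  unfolding invertible_el_def by blast

lemma invertible_el_mult:
  assumes "invertible_el u" "invertible_el v"
  shows "invertible_el (u * v)"
proof -
  obtain u' v' where "u * u' = 1" "u' * u = 1" "v * v' = 1" "v' * v = 1"
    using assms unfolding invertible_el_def by blast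
  moreover have "(u * v) * (v' * u') = u * (v * v') * u'" "(v' * u') * (u * v) = v' * (u' * u) * v"
    by (simp_all only: mult.assoc)
  ultimately show ?thesis
    by (intro invertible_elI) simp_all
qed

lemma invertible_el_of_complex: "z \<noteq> 0 \<Longrightarrow> invertible_el (of_complex z)"
  by (rule invertible_elI[of _ "of_complex (inverse z)"]) (simp_all flip: of_complex_mult)

lemma quasinilpotent_iff_invertible_one_minus:
  "quasinilpotent b \<longleftrightarrow> (\<forall>l. invertible_el (1 - of_complex l * b))"
proof -
  have factor: "1 - of_complex l * b = of_complex l * (of_complex (inverse l) - b)" if "l \<noteq> 0" for l
    using that by (simp add: right_diff_distrib mult.assoc flip: of_complex_mult)
  show ?thesis
    unfolding quasinilpotent_def of_complex_def[symmetric]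
  proof safe
    fix l
    assume "\<forall>z. z \<noteq> 0 \<longrightarrow> invertible_el (of_complex z - b)"
    then show "invertible_el (1 - of_complex l * b)"
    proof (cases "l = 0")
      case False
      with \<open>\<forall>z. z \<noteq> 0 \<longrightarrow> _\<close> have "invertible_el (of_complex (inverse l) - b)"
        by simp
      with False show ?thesis
        by (simp add: factor invertible_el_mult invertible_el_of_complex)
    qed (auto intro: invertible_elI[of 1 1])
  next
    fix z :: complex
    assume "\<forall>l. invertible_el (1 - of_complex l * b)" "z \<noteq> 0"
    moreover have "of_complex z - b = of_complex z * (1 - of_complex (inverse z) * b)"
      using \<open>z \<noteq> 0\<close> by (simp add: right_diff_distrib flip: mult.assoc of_complex_mult)
    ultimately show "invertible_el (of_complex z - b)"
      by (simp add: invertible_el_mult invertible_el_of_complex)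
  qed
qed

lemma geometric_sum_telescope:
  fixes c :: "'a::ring_1"
  shows "(1 - c) * (\<Sum>k<N. c ^ k) = 1 - c ^ N" and "(\<Sum>k<N. c ^ k) * (1 - c) = 1 - c ^ N"
proof -
  have "(1 - c) * (\<Sum>k<N. c ^ k) = (\<Sum>k<N. c ^ k - c ^ Suc k)"
    unfolding sum_distrib_left by (simp add: left_diff_distrib)
  also have "\<dots> = 1 - c ^ N"
    by (subst sum_lessThan_telescope'[of "\<lambda>k. c ^ k"]) simp
  finally show "(1 - c) * (\<Sum>k<N. c ^ k) = 1 - c ^ N" .
  have "(\<Sum>k<N. c ^ k) * (1 - c) = (\<Sum>k<N. c ^ k - c ^ Suc k)"
    unfolding sum_distrib_right by (simp add: right_diff_distrib power_commutes)
  also have "\<dots> = 1 - c ^ N"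
    by (subst sum_lessThan_telescope'[of "\<lambda>k. c ^ k"]) simp
  finally show "(\<Sum>k<N. c ^ k) * (1 - c) = 1 - c ^ N" .
qed

lemma invertible_el_one_minus_if_summable_powers:
  assumes "summable (\<lambda>k. c ^ k)"
  shows "invertible_el (1 - c)"
proof (rule invertible_elI)
  have "(\<lambda>N. 1 - c ^ N) \<longlonglongrightarrow> 1 - 0"
    by (intro tendsto_diff tendsto_const summable_LIMSEQ_zero assms)
  moreover have "(\<lambda>N. (1 - c) * (\<Sum>k<N. c ^ k)) \<longlonglongrightarrow> (1 - c) * suminf (\<lambda>k. c ^ k)"
    and "(\<lambda>N. (\<Sum>k<N. c ^ k) * (1 - c)) \<longlonglongrightarrow> suminf (\<lambda>k. c ^ k) * (1 - c)"
    by (intro tendsto_mult_left tendsto_mult_right summable_LIMSEQ assms)+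
  ultimately show "(1 - c) * suminf (\<lambda>k. c ^ k) = 1" "suminf (\<lambda>k. c ^ k) * (1 - c) = 1"
    unfolding geometric_sum_telescope by (auto dest: LIMSEQ_unique)
qed

section \<open>Superexponential decay\<close>

definition superexp_decay :: "(nat \<Rightarrow> 'a::real_normed_vector) \<Rightarrow> bool" where
  "superexp_decay s \<longleftrightarrow> (\<forall>\<epsilon>>0. \<exists>C. \<forall>k. norm (s k) \<le> C * \<epsilon> ^ k)"

lemma superexp_decayE:
  assumes "superexp_decay s" "\<epsilon> > 0"
  obtains C where "0 \<le> C" "\<And>k. norm (s k) \<le> C * \<epsilon> ^ k"
proof -
  obtain C where C: "\<And>k. norm (s k) \<le> C * \<epsilon> ^ k"
    using assms unfolding superexp_decay_def by blast
  have "0 \<le> C"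
    using order_trans[OF norm_ge_zero C[of 0]] by simp
  with C show ?thesis
    using that by blast
qed

lemma superexp_decayI_eventually:
  assumes "\<And>\<epsilon>. \<epsilon> > 0 \<Longrightarrow> eventually (\<lambda>k. norm (s k) \<le> \<epsilon> ^ k) sequentially"
  shows "superexp_decay s"
  unfolding superexp_decay_def
proof (intro allI impI)
  fix \<epsilon> :: real
  assume "\<epsilon> > 0"
  then obtain N where N: "\<And>k. k \<ge> N \<Longrightarrow> norm (s k) \<le> \<epsilon> ^ k"
    using assms by (auto simp: eventually_sequentially)
  define C where "C = 1 + (\<Sum>k<N. norm (s k) / \<epsilon> ^ k)"
  have "0 \<le> (\<Sum>k<N. norm (s k) / \<epsilon> ^ k)"
    by (intro sum_nonneg) (use \<open>\<epsilon> > 0\<close> in auto)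
  have "norm (s k) \<le> C * \<epsilon> ^ k" for k
  proof (cases "k < N")
    case True
    have "norm (s k) / \<epsilon> ^ k \<le> (\<Sum>k<N. norm (s k) / \<epsilon> ^ k)"
      by (rule member_le_sum) (use True \<open>\<epsilon> > 0\<close> in auto)
    then have "norm (s k) / \<epsilon> ^ k \<le> C"
      by (simp add: C_def)
    then show ?thesis
      using \<open>\<epsilon> > 0\<close> by (simp add: divide_le_eq)
  next
    case False
    have "\<epsilon> ^ k \<le> C * \<epsilon> ^ k"
      using \<open>0 \<le> (\<Sum>k<N. _)\<close> \<open>\<epsilon> > 0\<close> by (simp add: C_def mult_le_cancel_right1)
    with False N[of k] show ?thesis
      by simp
  qed
  then show "\<exists>C. \<forall>k. norm (s k) \<le> C * \<epsilon> ^ k"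
    by blast
qed

lemma superexp_decayI_root:
  assumes "(\<lambda>k. root k (norm (s k))) \<longlonglongrightarrow> 0"
  shows "superexp_decay s"
proof (rule superexp_decayI_eventually)
  fix \<epsilon> :: real
  assume "\<epsilon> > 0"
  have "eventually (\<lambda>k. root k (norm (s k)) < \<epsilon> \<and> k > 0) sequentially"
    using order_tendstoD(2)[OF assms \<open>\<epsilon> > 0\<close>] eventually_gt_at_top
    by (rule eventually_conj)
  then show "eventually (\<lambda>k. norm (s k) \<le> \<epsilon> ^ k) sequentially"
  proof eventually_elim
    case (elim k)
    then have "root k (norm (s k)) ^ k \<le> \<epsilon> ^ k"
      by (intro power_mono) (auto simp: real_root_ge_zero)
    with elim show ?case
      by (simp add: real_root_pow_pos2)
  qed
qed

lemma superexp_decay_root_tendsto_zero: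
  assumes "superexp_decay s"
  shows "(\<lambda>k. root k (norm (s k))) \<longlonglongrightarrow> 0"
proof (rule order_tendstoI)
  fix e :: real
  assume "e < 0"
  then show "eventually (\<lambda>k. e < root k (norm (s k))) sequentially"
    by (intro always_eventually allI) (meson less_le_trans norm_ge_zero real_root_ge_zero)
next
  fix e :: real
  assume "0 < e"
  then obtain C where "0 \<le> C" and C: "\<And>k. norm (s k) \<le> C * (e / 2) ^ k"
    using superexp_decayE[OF assms, of "e / 2"] by auto
  have "(\<lambda>k. root k (C + 1)) \<longlonglongrightarrow> 1"
    by (rule LIMSEQ_root_const) (use \<open>0 \<le> C\<close> in simp)
  then have "eventually (\<lambda>k. root k (C + 1) < 2) sequentially"
    by (rule order_tendstoD(2)) simp
  then have "eventually (\<lambda>k. root k (C + 1) < 2 \<and> k > 0) sequentially"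
    using eventually_gt_at_top by (rule eventually_conj)
  then show "eventually (\<lambda>k. root k (norm (s k)) < e) sequentially"
  proof eventually_elim
    case (elim k)
    have "norm (s k) \<le> (C + 1) * (e / 2) ^ k"
      using C[of k] \<open>0 < e\<close> by (simp add: distrib_right add_increasing2)
    then have "root k (norm (s k)) \<le> root k ((C + 1) * (e / 2) ^ k)"
      using elim by (intro real_root_le_mono) auto
    also have "\<dots> = root k (C + 1) * (e / 2)"
      using elim \<open>0 < e\<close> by (simp add: real_root_mult real_root_power_cancel)
    also have "\<dots> < 2 * (e / 2)"
      using elim \<open>0 < e\<close> by (intro mult_strict_right_mono) auto
    finally show ?case
      by simp
  qed
qed

lemma superexp_decay_geometric_mult:
  assumes "superexp_decay s" "0 \<le> K" "0 \<le> B" "\<And>k. norm (t k) \<le> K * B ^ k * norm (s k)"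
  shows "superexp_decay t"
  unfolding superexp_decay_def
proof (intro allI impI)
  fix \<epsilon> :: real
  assume "\<epsilon> > 0"
  then obtain C where "0 \<le> C" and C: "\<And>k. norm (s k) \<le> C * (\<epsilon> / (B + 1)) ^ k"
    using superexp_decayE[OF assms(1), of "\<epsilon> / (B + 1)"] assms(3) by auto
  have "norm (t k) \<le> (K * C) * \<epsilon> ^ k" for k
  proof -
    have "B * (\<epsilon> / (B + 1)) \<le> \<epsilon>"
      using assms(3) \<open>\<epsilon> > 0\<close> by (simp add: field_simps)
    then have "B ^ k * (\<epsilon> / (B + 1)) ^ k \<le> \<epsilon> ^ k"
      using assms(3) \<open>\<epsilon> > 0\<close> by (simp flip: power_mult_distrib add: power_mono)
    have "K * B ^ k * norm (s k) \<le> K * B ^ k * (C * (\<epsilon> / (B + 1)) ^ k)"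
      using C[of k] assms(2,3) by (intro mult_left_mono) auto
    also have "\<dots> = K * C * (B ^ k * (\<epsilon> / (B + 1)) ^ k)"
      by (simp only: ac_simps)
    also have "\<dots> \<le> K * C * \<epsilon> ^ k"
      using \<open>B ^ k * _ \<le> \<epsilon> ^ k\<close> \<open>0 \<le> C\<close> assms(2) by (simp add: mult_left_mono)
    finally have "K * B ^ k * norm (s k) \<le> K * C * \<epsilon> ^ k" .
    then show ?thesis
      using assms(4)[of k] by linarith
  qed
  then show "\<exists>C. \<forall>k. norm (t k) \<le> C * \<epsilon> ^ k"
    by blast
qed

lemma superexp_decay_Suc_iff: "superexp_decay (\<lambda>k. s (Suc k)) \<longleftrightarrow> superexp_decay s"
proof
  assume "superexp_decay (\<lambda>k. s (Suc k))"
  show "superexp_decay s"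
    unfolding superexp_decay_def
  proof (intro allI impI)
    fix \<epsilon> :: real
    assume "\<epsilon> > 0"
    then obtain C where C: "\<And>k. norm (s (Suc k)) \<le> C * \<epsilon> ^ k"
      using superexp_decayE[OF \<open>superexp_decay (\<lambda>k. s (Suc k))\<close>] by blast
    have "norm (s k) \<le> max (norm (s 0)) (C / \<epsilon>) * \<epsilon> ^ k" for k
    proof (cases k)
      case (Suc j)
      have "norm (s k) \<le> C / \<epsilon> * \<epsilon> ^ k"
        using C[of j] \<open>\<epsilon> > 0\<close> Suc by simp
      also have "\<dots> \<le> max (norm (s 0)) (C / \<epsilon>) * \<epsilon> ^ k"
        using \<open>\<epsilon> > 0\<close> by (intro mult_right_mono) auto
      finally show ?thesis .
    qed simp
    then show "\<exists>C. \<forall>k. norm (s k) \<le> C * \<epsilon> ^ k"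
      by blast
  qed
next
  assume "superexp_decay s"
  show "superexp_decay (\<lambda>k. s (Suc k))"
    unfolding superexp_decay_def
  proof (intro allI impI)
    fix \<epsilon> :: real
    assume "\<epsilon> > 0"
    then obtain C where C: "\<And>k. norm (s k) \<le> C * \<epsilon> ^ k"
      using superexp_decayE[OF \<open>superexp_decay s\<close>] by blast
    have "norm (s (Suc k)) \<le> (C * \<epsilon>) * \<epsilon> ^ k" for k
      using C[of "Suc k"] by (simp add: ac_simps)
    then show "\<exists>C. \<forall>k. norm (s (Suc k)) \<le> C * \<epsilon> ^ k"
      by blast
  qed
qed

lemma superexp_decay_subseq:
  assumes "superexp_decay s" "m > 0"
  shows "superexp_decay (\<lambda>k. s (m * k))"
  unfolding superexp_decay_def
proof (intro allI impI)
  fix \<epsilon> :: real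
  assume "\<epsilon> > 0"
  then obtain C where "0 \<le> C" and C: "\<And>k. norm (s k) \<le> C * min \<epsilon> 1 ^ k"
    using superexp_decayE[OF assms(1), of "min \<epsilon> 1"] by auto
  have "norm (s (m * k)) \<le> C * \<epsilon> ^ k" for k
  proof -
    have "min \<epsilon> 1 ^ (m * k) \<le> min \<epsilon> 1 ^ k"
      using \<open>\<epsilon> > 0\<close> \<open>m > 0\<close> by (intro power_decreasing) auto
    also have "\<dots> \<le> \<epsilon> ^ k"
      using \<open>\<epsilon> > 0\<close> by (intro power_mono) auto
    finally show ?thesis
      using C[of "m * k"] \<open>0 \<le> C\<close> by (meson mult_left_mono order_trans)
  qed
  then show "\<exists>C. \<forall>k. norm (s (m * k)) \<le> C * \<epsilon> ^ k"
    by blast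
qed

lemma superexp_decay_summable:
  fixes s :: "nat \<Rightarrow> 'a::banach"
  assumes "superexp_decay s"
  shows "summable s"
proof -
  obtain C where C: "\<And>k. norm (s k) \<le> C * (1 / 2) ^ k"
    using superexp_decayE[OF assms, of "1 / 2"] by auto
  show ?thesis
    by (rule summable_comparison_test'[where N = 0, OF _ C]) (intro summable_mult summable_geometric, simp)
qed

lemma eq_zero_if_superexp_decay_factor:
  fixes c :: "'a::real_normed_algebra_1"
  assumes "superexp_decay s" "\<And>k. c = u * s k * v ^ Suc k"
  shows "c = 0"
proof -
  have "norm c \<le> (norm u * norm v) * norm v ^ k * norm (s k)" for k
  proof -
    have "norm c \<le> norm (u * s k) * norm (v ^ Suc k)"
      unfolding assms(2)[of k] by (rule norm_mult_ineq)
    also have "\<dots> \<le> norm u * norm (s k) * norm (v ^ Suc k)"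
      by (intro mult_right_mono norm_mult_ineq) auto
    also have "\<dots> \<le> norm u * norm (s k) * norm v ^ Suc k"
      by (intro mult_left_mono norm_power_ineq) auto
    finally show ?thesis
      by (simp add: ac_simps)
  qed
  then have "superexp_decay (\<lambda>k. c)"
    by (intro superexp_decay_geometric_mult[OF assms(1), where K = "norm u * norm v" and B = "norm v"]) auto
  then obtain C where "\<And>k. norm c \<le> C * (1 / 2) ^ k"
    using superexp_decayE[of "\<lambda>k. c" "1 / 2"] by auto
  moreover have "(\<lambda>k. C * (1 / 2) ^ k) \<longlonglongrightarrow> C * 0"
    by (intro tendsto_mult tendsto_const LIMSEQ_power_zero) simp
  ultimately have "norm c \<le> C * 0"
    by (intro LIMSEQ_le_const[of "\<lambda>k. C * (1 / 2) ^ k"]) auto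
  then show ?thesis
    by simp
qed

lemma superexp_decay_powers_imp_quasinilpotent:
  assumes "superexp_decay (\<lambda>k. b ^ k)"
  shows "quasinilpotent b"
  unfolding quasinilpotent_iff_invertible_one_minus
proof
  fix l
  have "superexp_decay (\<lambda>k. (of_complex l * b) ^ k)"
    by (rule superexp_decay_geometric_mult[OF assms, of 1 "cmod l"])
       (simp_all add: of_complex_mult_power norm_of_complex_mult norm_power)
  then show "invertible_el (1 - of_complex l * b)"
    by (intro invertible_el_one_minus_if_summable_powers superexp_decay_summable)
qed

section \<open>Quasinilpotent elements have superexponentially decaying powers\<close>

definition resolvent :: "'a::complex_banach_star_algebra \<Rightarrow> complex \<Rightarrow> 'a" where
  "resolvent b l = (SOME v. (1 - of_complex l * b) * v = 1 \<and> v * (1 - of_complex l * b) = 1)"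

lemma resolvent_inverse:
  assumes "quasinilpotent b"
  shows "(1 - of_complex l * b) * resolvent b l = 1" "resolvent b l * (1 - of_complex l * b) = 1"
proof -
  have "\<exists>v. (1 - of_complex l * b) * v = 1 \<and> v * (1 - of_complex l * b) = 1"
    using assms unfolding quasinilpotent_iff_invertible_one_minus invertible_el_def by blast
  then show "(1 - of_complex l * b) * resolvent b l = 1" "resolvent b l * (1 - of_complex l * b) = 1"
    unfolding resolvent_def by (metis (mono_tags, lifting) someI_ex)+
qed

lemma norm_inverse_perturbation_le:
  fixes u v w h :: "'a::real_normed_algebra_1"
  assumes "v * u = 1" "(u + h) * w = 1" "norm v * norm h \<le> 1 / 2"
  shows "norm (w - v) \<le> 2 * norm v ^ 2 * norm h"
proof -
  have "v - w = v * ((u + h) * w) - w"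
    using assms(2) by simp
  also have "\<dots> = (v * u) * w + v * h * w - w"
    by (simp add: algebra_simps)
  also have "\<dots> = v * h * w"
    unfolding assms(1) by simp
  finally have "norm (w - v) = norm (v * h * w)"
    by (simp add: norm_minus_commute)
  also have "\<dots> \<le> norm v * norm h * norm w"
    by (meson norm_mult_ineq mult_right_mono norm_ge_zero order_trans)
  finally have diff_le: "norm (w - v) \<le> norm v * norm h * norm w" .
  have "norm w \<le> norm v + norm (w - v)"
    by (metis add.commute diff_add_cancel norm_triangle_ineq)
  also have "\<dots> \<le> norm v + 1 / 2 * norm w"
    using diff_le assms(3) by (smt (verit) mult_right_mono norm_ge_zero)
  finally have "norm w \<le> 2 * norm v"
    by simp
  then have "norm v * norm h * norm w \<le> norm v * norm h * (2 * norm v)"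
    by (intro mult_left_mono) auto
  with diff_le show ?thesis
    by (simp add: power2_eq_square ac_simps)
qed

lemma isCont_resolvent:
  assumes "quasinilpotent b"
  shows "isCont (resolvent b) l0"
proof -
  let ?R = "resolvent b l0"
  have small: "((\<lambda>l. cmod (l - l0) * norm b * norm ?R) \<longlongrightarrow> 0) (at l0)"
    by (rule tendsto_eq_intros refl | simp)+
  have "eventually (\<lambda>l. norm (resolvent b l - ?R) \<le> 2 * norm ?R ^ 2 * (cmod (l - l0) * norm b)) (at l0)"
    using order_tendstoD(2)[OF small, of "1 / 2"]
  proof (rule eventually_mono, simp)
    fix l
    assume "cmod (l - l0) * norm b * norm ?R < 1 / 2"
    have eq: "(1 - of_complex l0 * b) + of_complex (l0 - l) * b = 1 - of_complex l * b"
      by (simp add: of_complex_diff algebra_simps)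
    from \<open>cmod (l - l0) * norm b * norm ?R < 1 / 2\<close> have "norm ?R * norm (of_complex (l0 - l) * b) \<le> 1 / 2"
      by (simp add: norm_of_complex_mult norm_minus_commute ac_simps)
    moreover have "((1 - of_complex l0 * b) + of_complex (l0 - l) * b) * resolvent b l = 1"
      unfolding eq by (rule resolvent_inverse(1)[OF assms])
    ultimately have "norm (resolvent b l - ?R) \<le> 2 * norm ?R ^ 2 * norm (of_complex (l0 - l) * b)"
      using norm_inverse_perturbation_le[OF resolvent_inverse(2)[OF assms]] by blast
    then show "norm (resolvent b l - ?R) \<le> 2 * norm ?R ^ 2 * (cmod (l - l0) * norm b)"
      by (simp add: norm_of_complex_mult norm_minus_commute[of l0 l])
  qed
  moreover have "((\<lambda>l. 2 * norm ?R ^ 2 * (cmod (l - l0) * norm b)) \<longlongrightarrow> 0) (at l0)"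
    by (rule tendsto_eq_intros refl | simp)+
  ultimately have "((\<lambda>l. resolvent b l - ?R) \<longlongrightarrow> 0) (at l0)"
    by (rule Lim_null_comparison)
  then show ?thesis
    unfolding isCont_def by (rule LIM_zero_cancel)
qed

definition unit_root :: "nat \<Rightarrow> complex" where
  "unit_root m = exp (2 * of_real pi * \<i> / of_nat m)"

lemma unit_root_power: "unit_root m ^ k = exp (2 * of_real pi * \<i> * of_nat k / of_nat m)"
  unfolding unit_root_def exp_of_nat_mult[symmetric] by (simp add: ac_simps)

lemma norm_unit_root_power [simp]: "cmod (unit_root m ^ k) = 1"
  by (simp add: unit_root_power norm_exp_eq_Re)

lemma unit_root_power_order:
  assumes "0 < m"
  shows "(unit_root m ^ j) ^ m = 1"
proof -
  have "(unit_root m ^ j) ^ m = unit_root m ^ (j * m)"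
    by (simp add: power_mult)
  also have "\<dots> = 1"
    unfolding unit_root_power using complex_root_unity_eq_1[of m "j * m"] assms by simp
  finally show ?thesis .
qed

lemma sum_unit_root_powers:
  assumes "0 < m" "k < m"
  shows "(\<Sum>j<m. (unit_root m ^ j) ^ k) = (if k = 0 then of_nat m else 0)"
proof (cases "k = 0")
  case False
  let ?z = "unit_root m ^ k"
  have "\<not> m dvd k"
    using False assms(2) by (auto dest: dvd_imp_le)
  then have "?z \<noteq> 1"
    using complex_root_unity_eq_1[of m k] assms(1) by (simp add: unit_root_power)
  moreover have "(unit_root m ^ j) ^ k = ?z ^ j" for j
    by (simp flip: power_mult add: mult.commute)
  moreover have "?z ^ m = 1"
    using unit_root_power_order[OF assms(1)] by simp
  ultimately show ?thesis
    using False by (simp add: geometric_sum)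
qed simp

definition averaged_resolvent :: "'a::complex_banach_star_algebra \<Rightarrow> nat \<Rightarrow> complex \<Rightarrow> 'a" where
  "averaged_resolvent b m t = of_complex (1 / of_nat m) * (\<Sum>j<m. resolvent b (unit_root m ^ j * t))"

lemma resolvent_mult_one_minus_power:
  assumes "quasinilpotent b"
  shows "resolvent b l * (1 - of_complex (l ^ m) * b ^ m) = (\<Sum>k<m. of_complex (l ^ k) * b ^ k)"
proof -
  have "1 - of_complex (l ^ m) * b ^ m = (1 - of_complex l * b) * (\<Sum>k<m. (of_complex l * b) ^ k)"
    using geometric_sum_telescope(1)[of "of_complex l * b" m] by (simp add: of_complex_mult_power)
  then show ?thesis
    using resolvent_inverse(2)[OF assms, of l] by (simp add: mult.assoc[symmetric] of_complex_mult_power)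
qed

lemma averaged_resolvent_inverse:
  assumes "quasinilpotent b" "0 < m"
  shows "averaged_resolvent b m t * (1 - of_complex (t ^ m) * b ^ m) = 1"
proof -
  have "resolvent b (unit_root m ^ j * t) * (1 - of_complex (t ^ m) * b ^ m)
      = (\<Sum>k<m. of_complex ((unit_root m ^ j * t) ^ k) * b ^ k)" for j
    using resolvent_mult_one_minus_power[OF assms(1), of "unit_root m ^ j * t" m]
    by (simp add: power_mult_distrib unit_root_power_order[OF assms(2)])
  then have "(\<Sum>j<m. resolvent b (unit_root m ^ j * t)) * (1 - of_complex (t ^ m) * b ^ m)
      = (\<Sum>j<m. \<Sum>k<m. of_complex ((unit_root m ^ j * t) ^ k) * b ^ k)"
    by (simp add: sum_distrib_right)
  also have "\<dots> = (\<Sum>k<m. of_complex ((\<Sum>j<m. (unit_root m ^ j) ^ k) * t ^ k) * b ^ k)"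
    by (subst sum.swap) (simp add: of_complex_sum sum_distrib_right power_mult_distrib)
  also have "\<dots> = (\<Sum>k<m. if k = 0 then of_nat m else 0)"
    using assms(2) by (intro sum.cong) (auto simp: sum_unit_root_powers of_complex_of_nat)
  finally show ?thesis
    using assms(2) by (simp add: averaged_resolvent_def mult.assoc flip: of_complex_of_nat of_complex_mult)
qed

lemma norm_average_le:
  assumes "\<And>j. j < m \<Longrightarrow> norm (f j) \<le> B" "0 < m"
  shows "norm (of_complex (1 / of_nat m) * (\<Sum>j<m. f j)) \<le> B"
proof -
  have "norm (\<Sum>j<m. f j) \<le> of_nat m * B"
    using norm_sum[of f "{..<m}"] sum_bounded_above[of "{..<m}" "\<lambda>j. norm (f j)" B] assms(1) by auto
  then show ?thesis
    using assms(2) by (simp add: norm_of_complex_mult norm_divide field_simps)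
qed

lemma norm_averaged_resolvent_le:
  assumes "\<And>l. cmod l \<le> r \<Longrightarrow> norm (resolvent b l) \<le> M" "cmod t \<le> r" "0 < m"
  shows "norm (averaged_resolvent b m t) \<le> M"
  unfolding averaged_resolvent_def using assms by (intro norm_average_le assms(1)) (simp_all add: norm_mult)

lemma norm_averaged_resolvent_diff_le:
  assumes "\<And>l l'. cmod l \<le> r \<Longrightarrow> cmod l' \<le> r \<Longrightarrow> cmod (l - l') \<le> \<delta> \<Longrightarrow>
      norm (resolvent b l - resolvent b l') \<le> \<eta>"
    and "cmod t \<le> r" "cmod t' \<le> r" "cmod (t - t') \<le> \<delta>" "0 < m"
  shows "norm (averaged_resolvent b m t - averaged_resolvent b m t') \<le> \<eta>"
  unfolding averaged_resolvent_def right_diff_distrib[symmetric] sum_subtractf[symmetric]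
  using assms by (intro norm_average_le assms(1)) (simp_all add: norm_mult flip: right_diff_distrib)

lemma norm_sub_one_le_of_inverse:
  fixes g c :: "'a::real_normed_algebra_1"
  assumes "g * (1 - c) = 1"
  shows "norm (g - 1) \<le> norm g * norm c"
proof -
  have "g - 1 = g - (g - g * c)"
    using assms by (simp add: right_diff_distrib)
  then have "g - 1 = g * c"
    by simp
  then show ?thesis
    by (simp add: norm_mult_ineq)
qed

lemma norm_le_one_of_inverse_near_one:
  fixes g c :: "'a::real_normed_algebra_1"
  assumes "g * (1 - c) = 1" "norm (g - 1) \<le> 1 / 2"
  shows "norm c \<le> 1"
proof -
  have "c = (g - 1) - (g - 1) * c"
    using assms(1) by (simp add: algebra_simps)
  then have "norm c \<le> norm (g - 1) + norm (g - 1) * norm c"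
    by (metis norm_mult_ineq norm_triangle_ineq4 add_left_mono order_trans)
  also have "\<dots> \<le> 1 / 2 + 1 / 2 * norm c"
    using assms(2) by (intro add_mono mult_right_mono) auto
  finally show ?thesis
    by simp
qed

lemma eventually_power_norm_le_one_beyond:
  fixes b :: "'a::complex_banach_star_algebra"
  assumes qn: "quasinilpotent b"
    and bounded: "\<And>l. cmod l \<le> r \<Longrightarrow> norm (resolvent b l) \<le> M"
    and close: "\<And>l l'. cmod l \<le> r \<Longrightarrow> cmod l' \<le> r \<Longrightarrow> cmod (l - l') \<le> \<delta> \<Longrightarrow>
      norm (resolvent b l - resolvent b l') \<le> 1 / 4"
    and t: "0 \<le> t" "0 \<le> \<delta>" "t + \<delta> \<le> r"
    and lim: "(\<lambda>m. t ^ m * norm (b ^ m)) \<longlonglongrightarrow> 0"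
  shows "eventually (\<lambda>m. (t + \<delta>) ^ m * norm (b ^ m) \<le> 1) sequentially"
proof -
  have "(\<lambda>m. M * (t ^ m * norm (b ^ m))) \<longlonglongrightarrow> M * 0"
    by (intro tendsto_mult tendsto_const lim)
  then have "eventually (\<lambda>m. M * (t ^ m * norm (b ^ m)) < 1 / 4) sequentially"
    by (rule order_tendstoD(2)) simp
  then show ?thesis
    using eventually_gt_at_top[of 0]
  proof eventually_elim
    case (elim m)
    let ?G = "averaged_resolvent b m" and ?t = "complex_of_real t" and ?t' = "complex_of_real (t + \<delta>)"
    have in_disc: "cmod ?t \<le> r" "cmod ?t' \<le> r" "cmod (?t' - ?t) \<le> \<delta>"
      using t by (simp_all del: of_real_add flip: of_real_diff)
    have "norm (?G ?t) \<le> M"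
      using bounded in_disc(1) elim(2) by (rule norm_averaged_resolvent_le)
    have "norm (of_complex (?t ^ m) * b ^ m) = t ^ m * norm (b ^ m)"
      using t by (simp add: norm_of_complex_mult norm_power)
    then have "norm (?G ?t - 1) \<le> norm (?G ?t) * (t ^ m * norm (b ^ m))"
      using norm_sub_one_le_of_inverse[OF averaged_resolvent_inverse[OF qn \<open>0 < m\<close>]] by metis
    also have "\<dots> \<le> M * (t ^ m * norm (b ^ m))"
      by (intro mult_right_mono \<open>norm (?G ?t) \<le> M\<close>) (use t in simp)
    finally have near_one: "norm (?G ?t - 1) \<le> 1 / 4"
      using elim(1) by simp
    have "norm (?G ?t' - ?G ?t) \<le> 1 / 4"
      using close in_disc(2,1,3) elim(2) by (rule norm_averaged_resolvent_diff_le)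
    then have "norm (?G ?t' - 1) \<le> 1 / 2"
      using near_one norm_triangle_ineq[of "?G ?t' - ?G ?t" "?G ?t - 1"] by simp
    then have "norm (of_complex (?t' ^ m) * b ^ m) \<le> 1"
      by (rule norm_le_one_of_inverse_near_one[OF averaged_resolvent_inverse[OF qn \<open>0 < m\<close>]])
    then show ?case
      using t by (simp add: norm_of_complex_mult norm_power del: of_real_add)
  qed
qed

lemma power_mult_tendsto_zero_if_eventually_bounded:
  fixes c :: "nat \<Rightarrow> real"
  assumes "eventually (\<lambda>m. s ^ m * c m \<le> 1) sequentially" "\<And>m. 0 \<le> c m" "0 \<le> v" "v < s"
  shows "(\<lambda>m. v ^ m * c m) \<longlonglongrightarrow> 0"
proof (rule Lim_null_comparison)
  show "eventually (\<lambda>m. norm (v ^ m * c m) \<le> (v / s) ^ m) sequentially"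
    using assms(1)
  proof eventually_elim
    case (elim m)
    have "norm (v ^ m * c m) = (v / s) ^ m * (s ^ m * c m)"
      using assms(2-4) by (simp add: power_divide)
    also have "\<dots> \<le> (v / s) ^ m"
      using elim assms(3,4) by (simp add: mult_left_le)
    finally show ?case .
  qed
  show "(\<lambda>m. (v / s) ^ m) \<longlonglongrightarrow> 0"
    using assms(3,4) by (intro LIMSEQ_power_zero) simp
qed

lemma real_nonneg_step_induct:
  fixes P :: "real \<Rightarrow> bool"
  assumes "P 0" "\<delta> > 0" "0 \<le> u"
    and step: "\<And>t v. 0 \<le> t \<Longrightarrow> t \<le> u \<Longrightarrow> P t \<Longrightarrow> 0 \<le> v \<Longrightarrow> v < t + \<delta> \<Longrightarrow> P v"
  shows "P u"
proof -
  have "P (min u (real k * (\<delta> / 2)))" for k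
  proof (induction k)
    case (Suc k)
    have "0 \<le> real k * \<delta>"
      using assms(2) by simp
    then show ?case
      by (intro step[OF _ _ Suc]) (use assms(2,3) in \<open>auto simp: min_def distrib_right\<close>)
  qed (use assms(1,3) in simp)
  moreover obtain k where "u / (\<delta> / 2) \<le> real k"
    using real_arch_simple by blast
  then have "min u (real k * (\<delta> / 2)) = u"
    using assms(2) by (simp add: divide_le_eq)
  ultimately show ?thesis
    by metis
qed

lemma resolvent_bounded_uniformly_continuous:
  assumes qn: "quasinilpotent b" and "\<eta> > 0"
  obtains M \<delta> where "\<delta> > 0" "\<And>l. cmod l \<le> r \<Longrightarrow> norm (resolvent b l) \<le> M"
    and "\<And>l l'. cmod l \<le> r \<Longrightarrow> cmod l' \<le> r \<Longrightarrow> cmod (l - l') < \<delta> \<Longrightarrow>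
      norm (resolvent b l - resolvent b l') < \<eta>"
proof -
  have cont: "continuous_on (cball 0 r) (resolvent b)"
    by (intro continuous_at_imp_continuous_on ballI isCont_resolvent qn)
  obtain M where "\<forall>y \<in> resolvent b ` cball 0 r. norm y \<le> M"
    using compact_imp_bounded[OF compact_continuous_image[OF cont compact_cball]]
    unfolding bounded_iff by blast
  moreover have "uniformly_continuous_on (cball 0 r) (resolvent b)"
    using cont by (rule compact_uniformly_continuous) simp
  then obtain \<delta> where "\<delta> > 0" and "\<And>l l'. l \<in> cball 0 r \<Longrightarrow> l' \<in> cball 0 r \<Longrightarrow> dist l' l < \<delta> \<Longrightarrow>
      dist (resolvent b l') (resolvent b l) < \<eta>"
    using \<open>\<eta> > 0\<close> by (rule uniformly_continuous_onE) blast
  ultimately show ?thesis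
    using that[of \<delta> M] by (simp add: mem_cball_0 dist_norm)
qed

lemma quasinilpotent_power_growth:
  fixes b :: "'a::complex_banach_star_algebra"
  assumes qn: "quasinilpotent b" and "0 \<le> u"
  shows "(\<lambda>m. u ^ m * norm (b ^ m)) \<longlonglongrightarrow> 0"
proof -
  define r where "r = u + 1"
  obtain M \<delta>0 where "\<delta>0 > 0" and bounded: "\<And>l. cmod l \<le> r \<Longrightarrow> norm (resolvent b l) \<le> M"
    and \<delta>0: "\<And>l l'. cmod l \<le> r \<Longrightarrow> cmod l' \<le> r \<Longrightarrow> cmod (l - l') < \<delta>0 \<Longrightarrow>
      norm (resolvent b l - resolvent b l') < 1 / 4"
    by (rule resolvent_bounded_uniformly_continuous[OF qn, of "1 / 4" r]) auto
  define \<delta> where "\<delta> = min (\<delta>0 / 2) 1"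
  have "\<delta> > 0" "\<delta> \<le> 1"
    using \<open>\<delta>0 > 0\<close> by (auto simp: \<delta>_def)
  have close: "norm (resolvent b l - resolvent b l') \<le> 1 / 4"
    if "cmod l \<le> r" "cmod l' \<le> r" "cmod (l - l') \<le> \<delta>" for l l'
    using \<delta>0[of l l'] that \<open>\<delta>0 > 0\<close> by (simp add: \<delta>_def)
  show ?thesis
  proof (rule real_nonneg_step_induct[OF _ \<open>\<delta> > 0\<close> \<open>0 \<le> u\<close>])
    show "(\<lambda>m. 0 ^ m * norm (b ^ m)) \<longlonglongrightarrow> (0 :: real)"
      by (rule LIMSEQ_imp_Suc) simp
  next
    fix t v :: real
    assume "0 \<le> t" "t \<le> u" "(\<lambda>m. t ^ m * norm (b ^ m)) \<longlonglongrightarrow> 0" "0 \<le> v" "v < t + \<delta>"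
    moreover have "t + \<delta> \<le> r"
      using \<open>t \<le> u\<close> \<open>\<delta> \<le> 1\<close> by (simp add: r_def)
    ultimately have "eventually (\<lambda>m. (t + \<delta>) ^ m * norm (b ^ m) \<le> 1) sequentially"
      using \<open>\<delta> > 0\<close> by (intro eventually_power_norm_le_one_beyond[OF qn bounded close]) auto
    then show "(\<lambda>m. v ^ m * norm (b ^ m)) \<longlonglongrightarrow> 0"
      by (rule power_mult_tendsto_zero_if_eventually_bounded[OF _ _ \<open>0 \<le> v\<close> \<open>v < t + \<delta>\<close>]) simp
  qed
qed

theorem quasinilpotent_imp_superexp_decay_powers:
  assumes "quasinilpotent b"
  shows "superexp_decay (\<lambda>k. b ^ k)"
proof (rule superexp_decayI_eventually)
  fix \<epsilon> :: real
  assume "\<epsilon> > 0"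
  have "(\<lambda>m. (1 / \<epsilon>) ^ m * norm (b ^ m)) \<longlonglongrightarrow> 0"
    using \<open>\<epsilon> > 0\<close> by (intro quasinilpotent_power_growth assms) simp
  then have "eventually (\<lambda>m. (1 / \<epsilon>) ^ m * norm (b ^ m) < 1) sequentially"
    by (rule order_tendstoD(2)) simp
  then show "eventually (\<lambda>k. norm (b ^ k) \<le> \<epsilon> ^ k) sequentially"
  proof eventually_elim
    case (elim m)
    then have "norm (b ^ m) / \<epsilon> ^ m < 1"
      by (simp add: power_divide)
    then show ?case
      using \<open>\<epsilon> > 0\<close> by (simp add: divide_less_eq)
  qed
qed

section \<open>Idempotent corners\<close>

lemma power_cancel_of_mult_square:
  fixes a x :: "'a::ring_1"
  assumes "a * x ^ 2 = x"
  shows "a ^ j * x ^ (j + Suc k) = x ^ Suc k"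
proof (induction j)
  case (Suc j)
  have "a * x ^ Suc (Suc m) = x ^ Suc m" for m
  proof -
    have "a * x ^ Suc (Suc m) = (a * x ^ 2) * x ^ m"
      by (simp add: mult.assoc flip: power_add)
    then show ?thesis
      by (simp add: assms)
  qed
  then have "a ^ Suc j * x ^ (Suc j + Suc k) = a ^ j * x ^ (j + Suc k)"
    by (simp only: power_Suc2[of a] mult.assoc add_Suc add_Suc_right)
  with Suc show ?case
    by simp
qed simp

lemma power_mult_power_of_mult_square:
  fixes a x :: "'a::ring_1"
  assumes "a * x ^ 2 = x"
  shows "a ^ Suc k * x ^ Suc k = a * x"
  using power_cancel_of_mult_square[OF assms, of k 0] by (simp add: mult.assoc)

lemma idempotent_left_invariant_powers:
  fixes p a :: "'a::ring_1"
  assumes "p * p = p" "p * a = p * a * p"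
  shows "p * a ^ k * p = p * a ^ k" and "(p * a) ^ Suc k = p * a ^ Suc k"
proof -
  show pow: "p * a ^ k * p = p * a ^ k" for k
  proof (induction k)
    case (Suc k)
    have "p * a ^ Suc k * p = (p * a ^ k) * a * p"
      by (simp only: power_Suc2 mult.assoc)
    also have "\<dots> = (p * a ^ k * p) * a * p"
      by (simp only: Suc)
    also have "\<dots> = p * a ^ k * (p * a * p)"
      by (simp only: mult.assoc)
    also have "\<dots> = p * a ^ k * (p * a)"
      by (simp only: assms(2)[symmetric])
    also have "\<dots> = (p * a ^ k * p) * a"
      by (simp only: mult.assoc)
    also have "\<dots> = p * a ^ k * a"
      by (simp only: Suc)
    also have "\<dots> = p * a ^ Suc k"
      by (simp only: power_Suc2 mult.assoc)
    finally show ?case .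
  qed (simp add: assms(1))
  show "(p * a) ^ Suc k = p * a ^ Suc k"
  proof (induction k)
    case (Suc k)
    have "(p * a) ^ Suc (Suc k) = p * a ^ Suc k * (p * a)"
      by (simp only: power_Suc2[of "p * a" "Suc k"] Suc)
    also have "\<dots> = (p * a ^ Suc k * p) * a"
      by (simp only: mult.assoc)
    also have "\<dots> = p * a ^ Suc k * a"
      by (simp only: pow)
    finally show ?case
      by (simp only: power_Suc2 mult.assoc)
  qed simp
qed

lemma idempotent_right_invariant_powers:
  fixes q a :: "'a::ring_1"
  assumes "q * q = q" "a * q = q * a * q"
  shows "a ^ k * q = q * a ^ k * q"
proof (induction k)
  case (Suc k)
  have "a ^ Suc k * q = a * (a ^ k * q)"
    by (simp only: power_Suc mult.assoc)
  also have "\<dots> = a * (q * a ^ k * q)"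
    by (simp only: Suc)
  also have "\<dots> = (a * q) * a ^ k * q"
    by (simp only: mult.assoc)
  also have "\<dots> = (q * a * q) * a ^ k * q"
    by (simp only: assms(2))
  also have "\<dots> = q * a * (q * a ^ k * q)"
    by (simp only: mult.assoc)
  also have "\<dots> = q * a * (a ^ k * q)"
    by (simp only: Suc)
  also have "\<dots> = q * a ^ Suc k * q"
    by (simp only: power_Suc mult.assoc)
  finally show ?case .
qed (simp add: assms(1))

lemma idempotent_right_invariant_mult_power:
  fixes q a :: "'a::ring_1"
  assumes "q * q = q" "a * q = q * a * q"
  shows "(a * q) ^ Suc k = a ^ Suc k * q"
proof (induction k)
  case (Suc k)
  have "(a * q) ^ Suc (Suc k) = a ^ Suc k * (q * a * q)"
    by (simp only: power_Suc2[of "a * q" "Suc k"] Suc mult.assoc)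
  also have "\<dots> = a ^ Suc k * (a * q)"
    by (simp only: assms(2)[symmetric])
  also have "\<dots> = a ^ Suc (Suc k) * q"
    by (simp only: power_Suc2[of a "Suc k"] mult.assoc)
  finally show ?case .
qed simp

lemma commuting_idempotent_power:
  fixes a e :: "'a::ring_1"
  assumes "e * e = e" "e * a = a * e"
  shows "(a * e) ^ Suc k = e * a ^ Suc k * e"
proof -
  have "(a * e) ^ Suc k = a ^ Suc k * e"
  proof (induction k)
    case (Suc k)
    have "(a * e) ^ Suc (Suc k) = a ^ Suc k * e * (a * e)"
      by (simp only: power_Suc2[of "a * e" "Suc k"] Suc)
    also have "\<dots> = a ^ Suc k * (e * a) * e"
      by (simp only: mult.assoc)
    also have "\<dots> = (a ^ Suc k * a) * (e * e)"
      by (simp only: assms(2) mult.assoc)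
    finally show ?case
      by (simp only: assms(1) flip: power_Suc2)
  qed simp
  also have "\<dots> = (a ^ Suc k * e) * e"
    by (simp only: assms(1) mult.assoc)
  also have "\<dots> = e * a ^ Suc k * e"
    by (simp only: power_commuting_commutes[OF assms(2)[symmetric]])
  finally show ?thesis .
qed

lemma inverse_commute:
  fixes u r c :: "'a::ring_1"
  assumes "u * r = 1" "r * u = 1" "u * c = c * u"
  shows "r * c = c * r"
proof -
  have "r * c = r * c * (u * r)"
    using assms(1) by simp
  also have "\<dots> = r * (u * c) * r"
    by (simp add: assms(3) mult.assoc)
  also have "\<dots> = c * r"
    using assms(2) by (simp flip: mult.assoc)
  finally show ?thesis .
qed

lemma idempotent_corner_inverse:
  fixes p B r :: "'a::ring_1"
  assumes pp: "p * p = p" and pBp: "p * B * p = p * B"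
    and r: "(1 + p * B) * r = 1" "r * (1 + p * B) = 1"
  shows "p * (p * r) = p * r" "p * r * p = p * r"
    and "p * B * (p * r) = p - p * r" "p * r * B = p - p * r"
proof -
  have "(1 + p * B) * p = p * (1 + p * B)"
    using pp pBp by (simp add: distrib_left distrib_right mult.assoc[symmetric])
  then have rp: "r * p = p * r"
    by (rule inverse_commute[OF r])
  show "p * (p * r) = p * r"
    by (simp add: pp mult.assoc[symmetric])
  show "p * r * p = p * r"
    by (simp add: rp pp mult.assoc flip: mult.assoc[of p p])
  have "p * B * (p * r) = p * B * r"
    by (simp add: pBp flip: mult.assoc)
  moreover have "p = p * r + p * B * r"
  proof -
    have "p = p * ((1 + p * B) * r)"
      using r(1) by simp
    also have "\<dots> = p * r + p * B * r"
      by (simp add: distrib_left distrib_right pp flip: mult.assoc)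
    finally show ?thesis .
  qed
  ultimately show "p * B * (p * r) = p - p * r"
    by (metis add_diff_cancel_left')
  have "p = (r * (1 + p * B)) * p"
    using r(2) by simp
  also have "\<dots> = r * p + r * (p * B * p)"
    by (simp add: distrib_left distrib_right mult.assoc)
  also have "\<dots> = p * r + p * r * B"
    by (simp add: pBp rp flip: mult.assoc)
  finally show "p * r * B = p - p * r"
    by (metis add_diff_cancel_left')
qed

lemma triangular_inverse:
  fixes A X p s :: "'a::ring_1"
  assumes AX: "A * X = 1 - p" and XA: "X * A * (1 - p) = 1 - p" and pX: "p * X = 0" and Xp: "X * p = 0"
    and ps: "p * s = s" and sp: "s * p = s" and pAs: "p * A * s = p - s" and sA: "s * A = p - s"
  shows "(A + p) * (X + s - X * A * s) = 1" "(X + s - X * A * s) * (A + p) = 1"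
proof -
  have "(A + p) * (X + s - X * A * s) = A * X + A * s - (A * X) * A * s + p * X + p * s - (p * X) * A * s"
    by (simp add: algebra_simps)
  also have "\<dots> = (1 - p) + (A * s - (1 - p) * A * s) + s"
    using AX pX ps by simp
  also have "\<dots> = 1"
    using pAs by (simp add: algebra_simps)
  finally show "(A + p) * (X + s - X * A * s) = 1" .
  have "(X + s - X * A * s) * (A + p) = X * A + X * p + s * A + s * p - X * A * (s * A) - X * A * (s * p)"
    by (simp add: algebra_simps)
  also have "\<dots> = X * A + (p - s) + s - X * A * (p - s) - X * A * s"
    by (simp only: Xp sA sp mult_zero_right add_0_right)
  also have "\<dots> = X * A * (1 - p) + p"
    by (simp add: algebra_simps)
  also have "\<dots> = 1"
    using XA by simp
  finally show "(X + s - X * A * s) * (A + p) = 1" .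
qed

lemma corner_inverse_of_power:
  fixes T z q :: "'a::ring_1"
  assumes qT: "q * T = T" and Tq: "T * q = T"
    and Tz: "T ^ Suc m * z = q" and zT: "z * T ^ Suc m = q"
  shows "T * (z * T ^ m) = q" "z * T ^ m * T = q"
proof -
  have "T * z = z * T ^ Suc m * T * z"
    using qT by (simp only: zT)
  also have "\<dots> = z * T ^ Suc (Suc m) * z"
    by (simp only: power_Suc2[of T "Suc m"] mult.assoc)
  also have "\<dots> = z * T * (T ^ Suc m * z)"
    by (simp only: power_Suc[of T "Suc m"] mult.assoc)
  also have "\<dots> = z * T"
    by (simp only: Tz mult.assoc Tq)
  finally have "T * z = z * T" .
  then have "T * (z * T ^ m) = z * (T * T ^ m)"
    by (simp only: mult.assoc[symmetric])
  then show "T * (z * T ^ m) = q"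
    by (simp only: zT flip: power_Suc)
  show "z * T ^ m * T = q"
    by (simp only: zT mult.assoc flip: power_Suc2)
qed

lemma unit_add_idempotent_annihilator:
  fixes A p v r :: "'a::ring_1"
  assumes pp: "p * p = p" and pAp: "p * A * p = p * A"
    and v: "(A + p) * v = 1" and r: "r * (1 + p * A) = 1"
  shows "p * v * (1 - p) = 0"
proof -
  have "(1 + p * A) * p = p * (A + p)"
    by (simp only: distrib_left distrib_right mult_1_left pp pAp add.commute)
  have "p * v * (1 - p) = r * ((1 + p * A) * p) * v * (1 - p)"
    using r by (simp flip: mult.assoc)
  also have "\<dots> = r * p * ((A + p) * v) * (1 - p)"
    by (simp only: \<open>(1 + p * A) * p = p * (A + p)\<close> mult.assoc)
  also have "\<dots> = 0"
    using v pp by (simp add: right_diff_distrib mult.assoc)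
  finally show ?thesis .
qed

lemma unit_add_idempotent_corner:
  fixes A p v r :: "'a::ring_1"
  assumes pp: "p * p = p" and pAp: "p * A * p = p * A"
    and v: "(A + p) * v = 1" "v * (A + p) = 1" and r: "r * (1 + p * A) = 1"
  shows "A * (v * (1 - p)) = 1 - p" "v * (1 - p) * (A * (1 - p)) = 1 - p"
    and "(1 - p) * (v * (1 - p)) = v * (1 - p)"
proof -
  let ?q = "1 - p"
  have pq: "p * ?q = 0"
    by (simp add: right_diff_distrib pp)
  have pvq: "p * v * ?q = 0"
    by (rule unit_add_idempotent_annihilator[OF pp pAp v(1) r])
  have "v * ?q = p * v * ?q + ?q * (v * ?q)"
    by (simp add: algebra_simps)
  then show "?q * (v * ?q) = v * ?q"
    using pvq by simp
  have "A * (v * ?q) + p * v * ?q = (A + p) * v * ?q"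
    by (simp only: distrib_right mult.assoc)
  also have "\<dots> = ?q"
    using v(1) by simp
  finally show "A * (v * ?q) = ?q"
    using pvq by simp
  have "A * ?q = p * A * ?q + ?q * A * ?q"
    by (simp add: algebra_simps)
  then have Aq: "?q * A * ?q = A * ?q"
    using pAp by (simp add: right_diff_distrib)
  have "v * ?q * (A * ?q) = v * (?q * A * ?q)"
    by (simp only: mult.assoc)
  also have "\<dots> = v * (A * ?q)"
    by (simp only: Aq)
  also have "\<dots> = (v * (A + p) - v * p) * ?q"
    by (simp add: algebra_simps)
  also have "\<dots> = ?q - v * (p * ?q)"
    by (simp only: v(2)) (simp add: algebra_simps)
  finally show "v * ?q * (A * ?q) = ?q"
    using pq by simp
qed

lemma quasinilpotent_power:
  assumes "quasinilpotent b"
  shows "quasinilpotent (b ^ Suc n)"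
proof -
  have "superexp_decay (\<lambda>k. b ^ (Suc n * k))"
    by (intro superexp_decay_subseq quasinilpotent_imp_superexp_decay_powers assms) simp
  then show ?thesis
    unfolding power_mult by (rule superexp_decay_powers_imp_quasinilpotent)
qed

lemma invertible_one_plus_quasinilpotent:
  assumes "quasinilpotent b"
  shows "invertible_el (1 + b)"
proof -
  have "of_complex (- 1) = (- 1 :: 'a)"
    using of_complex_diff[of 0 1] by simp
  then show ?thesis
    using assms unfolding quasinilpotent_iff_invertible_one_minus by (metis diff_minus_eq_add mult_minus1)
qed

lemma quasinilpotent_mult_commuting_idempotent:
  fixes a e p :: "'a::complex_banach_star_algebra"
  assumes ee: "e * e = e" and ea: "e * a = a * e" and ep: "e * p = e"
    and pp: "p * p = p" and pap: "p * a = p * a * p" and qnil: "quasinilpotent (p * a)"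
  shows "quasinilpotent (a * e)"
proof -
  have powers: "(a * e) ^ Suc k = e * (p * a) ^ Suc k * e" for k
  proof -
    have "(a * e) ^ Suc k = e * p * a ^ Suc k * e"
      using commuting_idempotent_power[OF ee ea, of k] ep by simp
    then show ?thesis
      by (simp add: idempotent_left_invariant_powers(2)[OF pp pap] mult.assoc del: power_Suc)
  qed
  have "superexp_decay (\<lambda>k. (p * a) ^ Suc k)"
    using superexp_decay_Suc_iff[of "\<lambda>k. (p * a) ^ k"] quasinilpotent_imp_superexp_decay_powers[OF qnil]
    by simp
  then have "superexp_decay (\<lambda>k. (a * e) ^ Suc k)"
  proof (rule superexp_decay_geometric_mult[where K = "norm e * norm e" and B = 1])
    fix k
    let ?X = "(p * a) ^ Suc k"
    have "norm (e * ?X * e) \<le> norm (e * ?X) * norm e"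
      by (rule norm_mult_ineq)
    also have "\<dots> \<le> norm e * norm ?X * norm e"
      by (intro mult_right_mono norm_mult_ineq) simp
    finally show "norm ((a * e) ^ Suc k) \<le> norm e * norm e * 1 ^ k * norm ?X"
      unfolding powers by (simp add: ac_simps)
  qed simp_all
  then show ?thesis
    unfolding superexp_decay_Suc_iff by (rule superexp_decay_powers_imp_quasinilpotent)
qed

section \<open>From a generalized core-EP inverse\<close>

context
  fixes a x :: "'a::complex_banach_star_algebra"
  assumes gcore: "is_gcore_EP_inverse a x"
begin

lemma gcore_EP_square: "a * x ^ 2 = x"
  using gcore by (simp add: is_gcore_EP_inverse_def)

lemma gcore_EP_residual_decay: "superexp_decay (\<lambda>k. a ^ k - x * a ^ (k + 1))"
  using gcore by (simp add: is_gcore_EP_inverse_def superexp_decayI_root)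

lemma gcore_EP_shifted_residual_decay: "superexp_decay (\<lambda>k. a ^ Suc k - x * a ^ (Suc k + 1))"
  using superexp_decay_Suc_iff[of "\<lambda>k. a ^ k - x * a ^ (k + 1)"] gcore_EP_residual_decay by simp

lemma gcore_EP_residual_identities:
  "(a ^ k - x * a ^ (k + 1)) * x ^ Suc k = x - x * a * x"
  "(a ^ Suc k - x * a ^ (Suc k + 1)) * x ^ Suc k = a * x - x * a * (a * x)"
proof -
  have ax: "a ^ Suc k * x ^ Suc k = a * x"
    by (rule power_mult_power_of_mult_square[OF gcore_EP_square])
  have "a ^ k * x ^ Suc k = x"
    using power_cancel_of_mult_square[OF gcore_EP_square, of k 0] by simp
  then show "(a ^ k - x * a ^ (k + 1)) * x ^ Suc k = x - x * a * x"
    by (simp only: left_diff_distrib mult.assoc Suc_eq_plus1[symmetric] ax)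
  show "(a ^ Suc k - x * a ^ (Suc k + 1)) * x ^ Suc k = a * x - x * a * (a * x)"
    by (simp only: left_diff_distrib mult.assoc Suc_eq_plus1[symmetric] power_Suc[of a "Suc k"] ax)
qed

lemma gcore_EP_outer: "x * a * x = x"
proof -
  have "x * a * x - x = - 1 * (a ^ k - x * a ^ (k + 1)) * x ^ Suc k" for k
    by (simp only: mult.assoc gcore_EP_residual_identities(1)) simp
  then have "x * a * x - x = 0"
    by (rule eq_zero_if_superexp_decay_factor[OF gcore_EP_residual_decay])
  then show ?thesis
    by simp
qed

lemma gcore_EP_outer_range: "x * a * (a * x) = a * x"
proof -
  have "x * a * (a * x) - a * x = - 1 * (a ^ Suc k - x * a ^ (Suc k + 1)) * x ^ Suc k" for k
    by (simp only: mult.assoc gcore_EP_residual_identities(2)) simp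
  then have "x * a * (a * x) - a * x = 0"
    by (rule eq_zero_if_superexp_decay_factor[OF gcore_EP_shifted_residual_decay])
  then show ?thesis
    by simp
qed

lemma gcore_EP_complement_annihilates: "(1 - a * x) * a * (a * x) = 0"
proof -
  have "(1 - a * x) * a * (a * x) = a * (a ^ Suc k - x * a ^ (Suc k + 1)) * x ^ Suc k" for k
  proof -
    have "(1 - a * x) * a * (a * x) = a * (a * x - x * a * (a * x))"
      by (simp add: algebra_simps)
    also have "\<dots> = a * (a ^ Suc k - x * a ^ (Suc k + 1)) * x ^ Suc k"
      by (simp only: mult.assoc gcore_EP_residual_identities(2))
    finally show ?thesis .
  qed
  then show ?thesis
    by (rule eq_zero_if_superexp_decay_factor[OF gcore_EP_shifted_residual_decay])
qed

lemma gcore_EP_range_idempotent: "(a * x) * (a * x) = a * x"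
  using gcore_EP_outer by (simp add: mult.assoc)

lemma gcore_EP_complement_projection: "projection (1 - a * x)"
  using gcore gcore_EP_range_idempotent
  by (simp add: projection_def is_gcore_EP_inverse_def invol_diff algebra_simps)

lemma gcore_EP_complement_invariant: "(1 - a * x) * a = (1 - a * x) * a * (1 - a * x)"
  using gcore_EP_complement_annihilates by (simp add: right_diff_distrib)

lemma gcore_EP_complement_power: "((1 - a * x) * a) ^ Suc k = a * (a ^ k - x * a ^ (k + 1))"
proof -
  have "((1 - a * x) * a) ^ Suc k = (1 - a * x) * a ^ Suc k"
    using gcore_EP_complement_projection gcore_EP_complement_invariant
    by (intro idempotent_left_invariant_powers(2)) (simp add: projection_def)
  also have "\<dots> = a * (a ^ k - x * a ^ (k + 1))"
    by (simp add: algebra_simps)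
  finally show ?thesis .
qed

lemma gcore_EP_complement_decay: "superexp_decay (\<lambda>k. ((1 - a * x) * a) ^ k)"
proof -
  have "superexp_decay (\<lambda>k. ((1 - a * x) * a) ^ Suc k)"
    by (rule superexp_decay_geometric_mult[OF gcore_EP_residual_decay, where K = "norm a" and B = 1])
       (simp_all add: gcore_EP_complement_power norm_mult_ineq del: power_Suc)
  then show ?thesis
    by (simp only: superexp_decay_Suc_iff)
qed

lemma gcore_EP_range_powers: "x ^ k * a ^ k * (a * x) = a * x"
proof (induction k)
  case (Suc k)
  let ?q = "a * x"
  have right_inv: "a ^ k * ?q = ?q * a ^ k * ?q"
    using gcore_EP_range_idempotent
  proof (rule idempotent_right_invariant_powers)
    have "a * ?q = (1 - ?q) * a * ?q + ?q * a * ?q"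
      by (simp add: algebra_simps)
    then show "a * ?q = ?q * a * ?q"
      by (simp add: gcore_EP_complement_annihilates)
  qed
  have "x ^ Suc k * a ^ Suc k * ?q = x ^ k * (x * a * (a ^ k * ?q))"
    by (simp only: power_Suc2[of x] power_Suc[of a] mult.assoc)
  also have "\<dots> = x ^ k * (x * a * (?q * a ^ k * ?q))"
    by (simp only: right_inv)
  also have "\<dots> = x ^ k * ((x * a * ?q) * a ^ k * ?q)"
    by (simp only: mult.assoc)
  also have "\<dots> = x ^ k * (?q * a ^ k * ?q)"
    by (simp only: gcore_EP_outer_range)
  also have "\<dots> = x ^ k * (a ^ k * ?q)"
    by (simp only: right_inv[symmetric])
  also have "\<dots> = ?q"
    using Suc by (simp only: mult.assoc)
  finally show ?case .
qed simp

lemma gcore_EP_invertible_power_add: "invertible_el (a ^ Suc n + (1 - a * x))"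
proof -
  let ?p = "1 - a * x" and ?A = "a ^ Suc n" and ?X = "x ^ Suc n"
  have pp: "?p * ?p = ?p"
    using gcore_EP_complement_projection by (simp add: projection_def)
  have pAp: "?p * ?A * ?p = ?p * ?A"
    by (rule idempotent_left_invariant_powers(1)[OF pp gcore_EP_complement_invariant])
  have "quasinilpotent (((1 - a * x) * a) ^ Suc n)"
    by (intro quasinilpotent_power superexp_decay_powers_imp_quasinilpotent gcore_EP_complement_decay)
  then have "invertible_el (1 + ?p * ?A)"
    unfolding idempotent_left_invariant_powers(2)[OF pp gcore_EP_complement_invariant]
    by (rule invertible_one_plus_quasinilpotent)
  then obtain r where r: "(1 + ?p * ?A) * r = 1" "r * (1 + ?p * ?A) = 1"
    unfolding invertible_el_def by blast
  note s = idempotent_corner_inverse[OF pp pAp r]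
  have px: "?p * x = 0"
    using gcore_EP_square by (simp add: left_diff_distrib power2_eq_square mult.assoc)
  have xp: "x * ?p = 0"
    using gcore_EP_outer by (simp add: right_diff_distrib mult.assoc)
  have "?A * ?X = 1 - ?p"
    using power_mult_power_of_mult_square[OF gcore_EP_square] by simp
  moreover have "?X * ?A * (1 - ?p) = 1 - ?p"
    using gcore_EP_range_powers[of "Suc n"] by simp
  moreover have "?p * ?X = 0"
    by (simp only: power_Suc mult.assoc[symmetric] px mult_zero_left)
  moreover have "?X * ?p = 0"
    by (simp only: power_Suc2 mult.assoc xp mult_zero_right)
  ultimately show ?thesis
    using triangular_inverse[OF _ _ _ _ s] by (meson invertible_elI)
qed

lemma gcore_EP_drazin_limit:
  "(\<lambda>k. x ^ Suc k * a ^ k) \<longlonglongrightarrow> x - (\<Sum>j. x ^ Suc j * (a ^ j - x * a ^ (j + 1)))"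
proof -
  let ?f = "\<lambda>j. x ^ Suc j * (a ^ j - x * a ^ (j + 1))"
  have partial_sums: "x ^ Suc k * a ^ k = x - (\<Sum>j<k. ?f j)" for k
  proof (induction k)
    case (Suc k)
    have "x ^ Suc (Suc k) * a ^ Suc k = x ^ Suc k * a ^ k - ?f k"
      by (simp add: right_diff_distrib mult.assoc power_Suc2[of x "Suc k"] del: power_Suc)
    with Suc show ?case
      by simp
  qed simp
  have "superexp_decay ?f"
  proof (rule superexp_decay_geometric_mult[OF gcore_EP_residual_decay, where K = "norm x" and B = "norm x"])
    fix k
    have "norm (?f k) \<le> norm (x ^ Suc k) * norm (a ^ k - x * a ^ (k + 1))"
      by (rule norm_mult_ineq)
    also have "\<dots> \<le> norm x ^ Suc k * norm (a ^ k - x * a ^ (k + 1))"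
      by (intro mult_right_mono norm_power_ineq) simp
    finally show "norm (?f k) \<le> norm x * norm x ^ k * norm (a ^ k - x * a ^ (k + 1))"
      by simp
  qed simp_all
  then show ?thesis
    unfolding partial_sums by (intro tendsto_diff tendsto_const summable_LIMSEQ superexp_decay_summable)
qed

lemma gcore_EP_drazin_properties:
  assumes lim: "(\<lambda>k. x ^ Suc k * a ^ k) \<longlonglongrightarrow> y"
  shows "a * y = y * a" "y * a * x = x" "y * a * y = y"
proof -
  have "a * (x ^ Suc (Suc k) * a ^ Suc k) = x ^ Suc k * a ^ k * a" for k
    using power_cancel_of_mult_square[OF gcore_EP_square, of 1 k]
    by (simp add: mult.assoc[symmetric] power_Suc2[of a k] del: power_Suc)
  moreover have "(\<lambda>k. a * (x ^ Suc (Suc k) * a ^ Suc k)) \<longlonglongrightarrow> a * y"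
    using LIMSEQ_Suc[OF lim] by (rule tendsto_mult_left)
  moreover have "(\<lambda>k. x ^ Suc k * a ^ k * a) \<longlonglongrightarrow> y * a"
    using lim by (rule tendsto_mult_right)
  ultimately show "a * y = y * a"
    by (simp add: LIMSEQ_unique)
  have sq: "a * (x * x) = x"
    using gcore_EP_square by (simp add: power2_eq_square mult.assoc)
  have "x ^ Suc k * a ^ k * a * x = x" for k
  proof -
    have "x ^ Suc k * a ^ k * a * x = (x ^ Suc k * a ^ Suc k * (a * x)) * x"
      by (simp only: power_Suc2[of a k] mult.assoc sq)
    also have "\<dots> = a * x * x"
      by (simp only: gcore_EP_range_powers)
    also have "\<dots> = x"
      by (simp only: mult.assoc sq)
    finally show ?thesis .
  qed
  moreover have "(\<lambda>k. x ^ Suc k * a ^ k * a * x) \<longlonglongrightarrow> y * a * x"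
    using lim by (intro tendsto_mult_right)
  ultimately show yax: "y * a * x = x"
    by (simp add: LIMSEQ_const_iff)
  have "y * a * (x ^ Suc k * a ^ k) = x ^ Suc k * a ^ k" for k
    by (simp only: power_Suc mult.assoc[symmetric] yax)
  moreover have "(\<lambda>k. y * a * (x ^ Suc k * a ^ k)) \<longlonglongrightarrow> y * a * y"
    using lim by (rule tendsto_mult_left)
  ultimately show "y * a * y = y"
    using lim by (simp add: LIMSEQ_unique)
qed

lemma gcore_EP_gd_invertible: "gd_invertible a"
proof -
  obtain y where "(\<lambda>k. x ^ Suc k * a ^ k) \<longlonglongrightarrow> y"
    using gcore_EP_drazin_limit by blast
  note y = gcore_EP_drazin_properties[OF this]
  define e where "e = 1 - a * y"
  have "a * y * a = a * a * y"
    by (simp only: mult.assoc) (simp only: y(1))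
  have "e * e = e"
    using y(3) by (simp add: e_def algebra_simps)
  moreover have "e * a = a * e"
    using \<open>a * y * a = a * a * y\<close> by (simp add: e_def algebra_simps)
  moreover have "e * (1 - a * x) = e"
    using y(2) by (simp add: e_def algebra_simps)
  moreover have "(1 - a * x) * (1 - a * x) = 1 - a * x"
    using gcore_EP_complement_projection by (simp add: projection_def)
  ultimately have "quasinilpotent (a * e)"
    by (rule quasinilpotent_mult_commuting_idempotent[OF _ _ _ _ gcore_EP_complement_invariant
          superexp_decay_powers_imp_quasinilpotent[OF gcore_EP_complement_decay]])
  moreover have "a - a * a * y = a * e"
    by (simp add: e_def right_diff_distrib mult.assoc)
  ultimately show ?thesis
    unfolding gd_invertible_def using y(1,3) by metis
qed

end

section \<open>To a generalized core-EP inverse\<close>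

context
  fixes a p :: "'a::complex_banach_star_algebra" and n :: nat
  assumes proj: "projection p" and invariant: "p * a = p * a * p"
    and qnil: "quasinilpotent (p * a)" and unit: "invertible_el (a ^ Suc n + p)"
begin

lemma projection_unit_range_inverse:
  obtains x where "a * x = 1 - p" "(1 - p) * x = x" "x * a * (1 - p) = 1 - p"
proof -
  let ?q = "1 - p"
  have pp: "p * p = p"
    using proj by (simp add: projection_def)
  have qq: "?q * ?q = ?q"
    using pp by (simp add: algebra_simps)
  obtain v where v: "(a ^ Suc n + p) * v = 1" "v * (a ^ Suc n + p) = 1"
    using unit unfolding invertible_el_def by blast
  have "invertible_el (1 + p * a ^ Suc n)"
    using invertible_one_plus_quasinilpotent[OF quasinilpotent_power[OF qnil, of n]]
    by (simp only: idempotent_left_invariant_powers(2)[OF pp invariant])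
  then obtain r where "r * (1 + p * a ^ Suc n) = 1"
    unfolding invertible_el_def by blast
  note corner = unit_add_idempotent_corner[OF pp idempotent_left_invariant_powers(1)[OF pp invariant] v this]
  have aq: "a * ?q = ?q * a * ?q"
    using invariant pp by (simp add: algebra_simps)
  let ?T = "a * ?q" and ?z = "v * ?q"
  have "?q * ?T = ?T"
    by (simp only: aq[symmetric] mult.assoc[symmetric])
  moreover have "?T * ?q = ?T"
    by (simp only: mult.assoc qq)
  moreover have "?T ^ Suc n * ?z = ?q" "?z * ?T ^ Suc n = ?q"
    using corner by (simp_all add: idempotent_right_invariant_mult_power[OF qq aq] mult.assoc
        del: power_Suc)
  ultimately have Tx: "?T * (?z * ?T ^ n) = ?q" "?z * ?T ^ n * ?T = ?q"
    by (rule corner_inverse_of_power)+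
  show ?thesis
  proof
    show "a * (?z * ?T ^ n) = ?q"
      using Tx(1) corner(3) by (metis mult.assoc)
    show "?q * (?z * ?T ^ n) = ?z * ?T ^ n"
      using corner(3) by (simp add: mult.assoc[symmetric])
    show "?z * ?T ^ n * a * ?q = ?q"
      using Tx(2) by (simp add: mult.assoc)
  qed
qed

lemma projection_unit_residual_decay:
  assumes "x * a * (1 - p) = 1 - p"
  shows "superexp_decay (\<lambda>k. a ^ k - x * a ^ (k + 1))"
proof -
  have pp: "p * p = p"
    using proj by (simp add: projection_def)
  have "(1 - x * a) * (1 - p) = 0"
    using assms by (simp add: left_diff_distrib)
  have residual: "a ^ Suc k - x * a ^ (Suc k + 1) = (1 - x * a) * (p * a) ^ Suc k" for k
  proof -
    have "a ^ Suc k - x * a ^ (Suc k + 1)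
        = (1 - x * a) * (p * a ^ Suc k) + (1 - x * a) * (1 - p) * a ^ Suc k"
      by (simp add: algebra_simps)
    then show ?thesis
      using \<open>(1 - x * a) * (1 - p) = 0\<close>
      by (simp add: idempotent_left_invariant_powers(2)[OF pp invariant] del: power_Suc)
  qed
  have "superexp_decay (\<lambda>k. (p * a) ^ Suc k)"
    using superexp_decay_Suc_iff[of "\<lambda>k. (p * a) ^ k"] quasinilpotent_imp_superexp_decay_powers[OF qnil]
    by simp
  then have "superexp_decay (\<lambda>k. a ^ Suc k - x * a ^ (Suc k + 1))"
  proof (rule superexp_decay_geometric_mult[where K = "norm (1 - x * a)" and B = 1])
    fix k
    show "norm (a ^ Suc k - x * a ^ (Suc k + 1)) \<le> norm (1 - x * a) * 1 ^ k * norm ((p * a) ^ Suc k)"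
      unfolding residual by (simp add: norm_mult_ineq del: power_Suc)
  qed simp_all
  then show ?thesis
    using superexp_decay_Suc_iff[of "\<lambda>k. a ^ k - x * a ^ (k + 1)"] by simp
qed

lemma projection_unit_has_gcore_EP_inverse: "has_gcore_EP_inverse a"
proof -
  obtain x where ax: "a * x = 1 - p" and qx: "(1 - p) * x = x" and xaq: "x * a * (1 - p) = 1 - p"
    by (rule projection_unit_range_inverse)
  have "a * x ^ 2 = x"
    using ax qx by (simp add: power2_eq_square mult.assoc[symmetric])
  moreover have "invol (a * x) = a * x"
    using proj by (simp add: ax projection_def invol_diff)
  ultimately show ?thesis
    using superexp_decay_root_tendsto_zero[OF projection_unit_residual_decay[OF xaq]]
    unfolding has_gcore_EP_inverse_def is_gcore_EP_inverse_def by blast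
qed

end

theorem corollary3p7:
  fixes a :: "'a::complex_banach_star_algebra" and n :: nat
  assumes "n \<ge> 1"
  shows "has_gcore_EP_inverse a \<longleftrightarrow>
    (gd_invertible a \<and>
     (\<exists>p. projection p \<and> p * a = p * a * p \<and> quasinilpotent (p * a) \<and>
          invertible_el (a ^ n + p)))"
proof -
  obtain m where n: "n = Suc m"
    using assms by (cases n) auto
  show ?thesis
  proof
    assume "has_gcore_EP_inverse a"
    then obtain x where x: "is_gcore_EP_inverse a x"
      unfolding has_gcore_EP_inverse_def by blast
    have "quasinilpotent ((1 - a * x) * a)"
      by (rule superexp_decay_powers_imp_quasinilpotent[OF gcore_EP_complement_decay[OF x]])
    with x n show "gd_invertible a \<and> (\<exists>p. projection p \<and> p * a = p * a * p \<and>
        quasinilpotent (p * a) \<and> invertible_el (a ^ n + p))"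
      using gcore_EP_gd_invertible gcore_EP_complement_projection gcore_EP_complement_invariant
        gcore_EP_invertible_power_add by blast
  next
    assume "gd_invertible a \<and> (\<exists>p. projection p \<and> p * a = p * a * p \<and>
        quasinilpotent (p * a) \<and> invertible_el (a ^ n + p))"
    with n show "has_gcore_EP_inverse a"
      using projection_unit_has_gcore_EP_inverse by blast
  qed
qed

end
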